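(* Let $\mu>0$ and $k>0$. The function $T_l:(x_l,1)\to(0,+\infty)$ defined in the context is continuous, strictly decreasing, and satisfies: (i) $\displaystyle\lim_{x\to1^-}T_l(x)=\frac{1}{\sqrt{\mu}}\arctan\frac{k}{\sqrt{\mu}}$; (ii) $\displaystyle\lim_{x\to x_l^+}T_l(x)=+\infty$.
   Context: Let $G(u)=u^3/3-u^4/4$ for $u\in[0,1]$ (a primitive of $g(u)=u^2(1-u)$). Let $y(x)=-k(1-x)$ for $x\in(0,1)$ and let $x_l\in(0,1)$ be the abscissa of the unique intersection, in $(0,1)$, of the line $v=y(u)$ with the curve $v^2=2\mu G(u)$, $v<0$. For $x\in(x_l,1)$ one has $y(x)^2<2\mu G(x)$, and $m(x)$ denotes the unique number in $(0,x)$ with $2\mu G(m(x))=2\mu G(x)-y(x)^2$. Define $$T_l(x)=\int_{m(x)}^{x}\frac{du}{\sqrt{y(x)^2+2\mu(G(u)-G(x))}},\qquad x\in(x_l,1).$$ *)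

theory Defs
  imports "HOL-Analysis.Analysis"
begin

text \<open>Primitive G of g(u) = u^2 (1 - u).\<close>
definition G :: "real \<Rightarrow> real" where
  "G u = u ^ 3 / 3 - u ^ 4 / 4"

definition yline :: "real \<Rightarrow> real \<Rightarrow> real" where
  "yline k x = - k * (1 - x)"

definition xl :: "real \<Rightarrow> real \<Rightarrow> real" where
  "xl mu k = (THE u. 0 < u \<and> u < 1 \<and>
     (\<exists>v. v = yline k u \<and> v ^ 2 = 2 * mu * G u \<and> v < 0))"

definition mfun :: "real \<Rightarrow> real \<Rightarrow> real \<Rightarrow> real" where
  "mfun mu k x = (THE s. 0 < s \<and> s < x \<and>
     2 * mu * G s = 2 * mu * G x - (yline k x) ^ 2)"

definition Tl_integrand :: "real \<Rightarrow> real \<Rightarrow> real \<Rightarrow> real \<Rightarrow> real" where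
  "Tl_integrand mu k x u = 1 / sqrt ((yline k x) ^ 2 + 2 * mu * (G u - G x))"

definition Tl :: "real \<Rightarrow> real \<Rightarrow> real \<Rightarrow> real" where
  "Tl mu k x = integral {mfun mu k x .. x} (Tl_integrand mu k x)"

end

theory Submission
  imports Defs
begin

(* Write s = 1 - x and r(t) = sqrt (2 (G 1 - G (1 - t))) (drop_root). The radicand of T_l is
   mu (R^2 - r(1 - u)^2) with R^2 = r(s)^2 + (k^2/mu) s^2 (energy_identity), so the turning point is
   m(x) = 1 - r^-1(R). The substitution r(1 - u) = R sin theta removes the square-root singularity:
     T_l(x) = mu^(-1/2) * integral of 1 / r'(r^-1(R sin theta)) over [theta_0, pi/2],  sin theta_0 = r(s) / R.
   As s grows, R and 1 / r' o r^-1 increase and theta_0 decreases, so T_l decreases in x.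
   At s = 0 the integrand is 1 and theta_0 = pi/2 - arctan (k / sqrt mu), giving the limit at 1.
   Near x_l the turning point m(x) tends to 0, and G u - G m = O(m^3) on [m, 2m] forces
   T_l(x) >= c m(x)^(-1/2). *)

lemma G_has_real_derivative: "(G has_real_derivative u\<^sup>2 * (1 - u)) (at u)"
  unfolding G_def
  by (auto intro!: derivative_eq_intros simp: algebra_simps power2_eq_square power3_eq_cube)

lemma continuous_on_G: "continuous_on S G"
  unfolding G_def by (intro continuous_intros) auto

lemma G_strict_mono_on: "strict_mono_on {0..1} G"
proof (rule strict_mono_onI)
  fix a b :: real assume "a \<in> {0..1}" "b \<in> {0..1}" "a < b"
  then show "G a < G b"
    by (intro DERIV_pos_imp_increasing_open[OF \<open>a < b\<close> _ continuous_on_G])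
       (auto intro!: exI G_has_real_derivative)
qed

lemma G_le_cube: "G u \<le> u ^ 3 / 3"
  unfolding G_def by simp

definition drop_quot :: "real \<Rightarrow> real" where
  "drop_quot s = 1 - 4 * s / 3 + s\<^sup>2 / 2"

definition drop_root :: "real \<Rightarrow> real" where
  "drop_root s = s * sqrt (drop_quot s)"

lemma drop_quot_pos: "drop_quot s > 0"
proof -
  have "drop_quot s = (s - 4/3)\<^sup>2 / 2 + 1/9"
    by (simp add: drop_quot_def power2_eq_square field_simps)
  then show ?thesis
    by (simp add: add_nonneg_pos)
qed

lemma drop_quot_strict_antimono:
  assumes "0 \<le> s" "s < t" "t \<le> 1"
  shows "drop_quot t < drop_quot s"
proof -
  have "drop_quot s - drop_quot t = (t - s) * (4/3 - (s + t) / 2)"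
    unfolding drop_quot_def power2_eq_square by argo
  moreover have "(t - s) * (4/3 - (s + t) / 2) > 0"
    using assms by (intro mult_pos_pos) auto
  ultimately show ?thesis by simp
qed

lemma continuous_on_drop_quot: "continuous_on S drop_quot"
  unfolding drop_quot_def by (intro continuous_intros) auto

lemma drop_root_sq: "(drop_root s)\<^sup>2 = 2 * (G 1 - G (1 - s))"
proof -
  have "(drop_root s)\<^sup>2 = s\<^sup>2 * drop_quot s"
    using drop_quot_pos[of s] by (simp add: drop_root_def power_mult_distrib)
  also have "\<dots> = 2 * (G 1 - G (1 - s))"
    unfolding G_def drop_quot_def
    by (simp add: field_simps power2_eq_square power3_eq_cube power4_eq_xxxx)
  finally show ?thesis .
qed

lemma drop_root_nonneg: "0 \<le> s \<Longrightarrow> 0 \<le> drop_root s"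
  unfolding drop_root_def using drop_quot_pos[of s] by simp

lemma drop_root_pos: "0 < s \<Longrightarrow> 0 < drop_root s"
  unfolding drop_root_def using drop_quot_pos[of s] by simp

lemma drop_root_0 [simp]: "drop_root 0 = 0"
  by (simp add: drop_root_def)

lemma drop_root_strict_mono_on: "strict_mono_on {0..1} drop_root"
proof (rule strict_mono_onI)
  fix s t :: real assume "s \<in> {0..1}" "t \<in> {0..1}" "s < t"
  then have "G (1 - t) < G (1 - s)"
    by (intro strict_mono_onD[OF G_strict_mono_on]) auto
  then have "(drop_root s)\<^sup>2 < (drop_root t)\<^sup>2"
    by (simp add: drop_root_sq)
  then show "drop_root s < drop_root t"
    using \<open>t \<in> {0..1}\<close> by (auto intro: power_less_imp_less_base drop_root_nonneg)
qed

lemma continuous_on_drop_root: "continuous_on S drop_root"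
  unfolding drop_root_def using drop_quot_pos
  by (intro continuous_intros continuous_on_drop_quot)

lemma drop_root_has_real_derivative:
  "(drop_root has_real_derivative (1 - s)\<^sup>2 / sqrt (drop_quot s)) (at s)"
proof -
  have q: "0 < drop_quot s"
    by (rule drop_quot_pos)
  have "(drop_root has_real_derivative
          sqrt (drop_quot s) + s * ((s - 4/3) / (2 * sqrt (drop_quot s)))) (at s)"
    using q unfolding drop_root_def[abs_def] drop_quot_def
    by (auto intro!: derivative_eq_intros simp: field_simps)
  also have "sqrt (drop_quot s) + s * ((s - 4/3) / (2 * sqrt (drop_quot s)))
               = (2 * (sqrt (drop_quot s))\<^sup>2 + s * (s - 4/3)) / (2 * sqrt (drop_quot s))"
    using q by (simp add: field_simps power2_eq_square)
  also have "2 * (sqrt (drop_quot s))\<^sup>2 + s * (s - 4/3) = 2 * (1 - s)\<^sup>2"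
    using q by (simp add: drop_quot_def power2_eq_square algebra_simps)
  finally show ?thesis
    by simp
qed

definition drop_root_inv :: "real \<Rightarrow> real" where
  "drop_root_inv = inv_into {0..1} drop_root"

lemma drop_root_image: "drop_root ` {0..1} = {0..drop_root 1}"
proof
  show "drop_root ` {0..1} \<subseteq> {0..drop_root 1}"
    using strict_mono_on_leD[OF drop_root_strict_mono_on] by (auto intro!: drop_root_nonneg)
  show "{0..drop_root 1} \<subseteq> drop_root ` {0..1}"
    using IVT'[of drop_root 0 _ 1] continuous_on_drop_root by force
qed

lemma drop_root_inv_drop_root: "s \<in> {0..1} \<Longrightarrow> drop_root_inv (drop_root s) = s"
  unfolding drop_root_inv_def
  by (rule inv_into_f_f[OF strict_mono_on_imp_inj_on[OF drop_root_strict_mono_on]])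

lemma drop_root_drop_root_inv:
  assumes "y \<in> {0..drop_root 1}"
  shows "drop_root (drop_root_inv y) = y" "drop_root_inv y \<in> {0..1}"
  using assms unfolding drop_root_inv_def drop_root_image[symmetric]
  by (rule f_inv_into_f, rule inv_into_into)

lemma drop_root_inv_0 [simp]: "drop_root_inv 0 = 0"
  using drop_root_inv_drop_root[of 0] by simp

lemma drop_root_inv_1 [simp]: "drop_root_inv (drop_root 1) = 1"
  using drop_root_inv_drop_root[of 1] by simp

lemma drop_root_inv_less_1:
  assumes "0 \<le> y" "y < drop_root 1"
  shows "drop_root_inv y < 1"
  using drop_root_drop_root_inv[of y] assms by (cases "drop_root_inv y = 1") auto

lemma drop_root_inv_mono:
  assumes "0 \<le> y" "y \<le> z" "z \<le> drop_root 1"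
  shows "drop_root_inv y \<le> drop_root_inv z"
  using assms drop_root_drop_root_inv[of y] drop_root_drop_root_inv[of z]
    strict_mono_on_leD[OF drop_root_strict_mono_on, of "drop_root_inv z" "drop_root_inv y"]
  by (cases "drop_root_inv y \<le> drop_root_inv z") auto

lemma continuous_on_drop_root_inv: "continuous_on {0..drop_root 1} drop_root_inv"
  unfolding drop_root_image[symmetric]
  by (rule continuous_on_inv[OF continuous_on_drop_root compact_Icc])
     (simp add: drop_root_inv_drop_root)

definition drop_root_recip_deriv :: "real \<Rightarrow> real" where
  "drop_root_recip_deriv t = sqrt (drop_quot t) / (1 - t)\<^sup>2"

lemma drop_root_recip_deriv_0 [simp]: "drop_root_recip_deriv 0 = 1"
  by (simp add: drop_root_recip_deriv_def drop_quot_def)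

lemma continuous_on_drop_root_recip_deriv: "continuous_on {..<1} drop_root_recip_deriv"
  unfolding drop_root_recip_deriv_def
  by (intro continuous_intros continuous_on_drop_quot) (use drop_quot_pos in \<open>auto simp: less_imp_le\<close>)

lemma drop_root_recip_deriv_mono:
  assumes "0 \<le> s" "s \<le> t" "t < 1"
  shows "drop_root_recip_deriv s \<le> drop_root_recip_deriv t"
proof -
  have eq: "drop_root_recip_deriv (1 - v) = sqrt (1/(6 * v^4) + 1/(3 * v^3) + 1/(2 * v^2))"
    if "0 < v" for v
  proof -
    have "drop_quot (1 - v) = (1/(6 * v^4) + 1/(3 * v^3) + 1/(2 * v^2)) * (v\<^sup>2)\<^sup>2"
      using that by (simp add: drop_quot_def field_simps power2_eq_square power3_eq_cube power4_eq_xxxx)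
    moreover have "sqrt ((v\<^sup>2)\<^sup>2) = v\<^sup>2"
      by (simp only: real_sqrt_abs abs_power2)
    ultimately show ?thesis
      using that by (simp only: drop_root_recip_deriv_def real_sqrt_mult) simp
  qed
  have v: "0 < 1 - t" "1 - t \<le> 1 - s"
    using assms by auto
  have "1/(6 * (1 - s)^n) \<le> 1/(6 * (1 - t)^n)" "1/(3 * (1 - s)^n) \<le> 1/(3 * (1 - t)^n)"
       "1/(2 * (1 - s)^n) \<le> 1/(2 * (1 - t)^n)" for n
    using v by (auto intro!: divide_left_mono mult_pos_pos power_mono)
  then show ?thesis
    using eq[of "1 - s"] eq[of "1 - t"] v by (simp add: add_mono)
qed

lemma drop_root_recip_deriv_ge_1: "0 \<le> t \<Longrightarrow> t < 1 \<Longrightarrow> 1 \<le> drop_root_recip_deriv t"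
  using drop_root_recip_deriv_mono[of 0 t] by simp

definition level :: "real \<Rightarrow> real \<Rightarrow> real" where
  "level c s = s * sqrt (drop_quot s + c)"

lemma level_sq: "0 \<le> c \<Longrightarrow> (level c s)\<^sup>2 = (drop_root s)\<^sup>2 + c * s\<^sup>2"
  unfolding level_def drop_root_def using drop_quot_pos[of s]
  by (simp add: power_mult_distrib algebra_simps)

lemma level_nonneg: "0 \<le> c \<Longrightarrow> 0 \<le> s \<Longrightarrow> 0 \<le> level c s"
  unfolding level_def using drop_quot_pos[of s] by simp

lemma level_0 [simp]: "level c 0 = 0"
  by (simp add: level_def)

lemma drop_root_less_level: "0 < c \<Longrightarrow> 0 < s \<Longrightarrow> drop_root s < level c s"
  unfolding level_def drop_root_def using drop_quot_pos[of s] by simp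

lemma level_strict_mono_on:
  assumes "0 \<le> c"
  shows "strict_mono_on {0..1} (level c)"
proof (rule strict_mono_onI)
  fix s t :: real assume st: "s \<in> {0..1}" "t \<in> {0..1}" "s < t"
  then have "(drop_root s)\<^sup>2 < (drop_root t)\<^sup>2"
    using strict_mono_onD[OF drop_root_strict_mono_on] drop_root_nonneg
    by (auto intro!: power_strict_mono)
  moreover have "c * s\<^sup>2 \<le> c * t\<^sup>2"
    using st assms by (auto intro!: mult_left_mono power_mono)
  ultimately have "(level c s)\<^sup>2 < (level c t)\<^sup>2"
    using assms by (simp add: level_sq)
  then show "level c s < level c t"
    by (rule power_less_imp_less_base) (use st assms in \<open>auto intro: level_nonneg\<close>)
qed

lemma continuous_on_level: "0 \<le> c \<Longrightarrow> continuous_on S (level c)"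
  unfolding level_def using drop_quot_pos
  by (intro continuous_intros continuous_on_drop_quot)

definition start_angle :: "real \<Rightarrow> real \<Rightarrow> real" where
  "start_angle c s = arcsin (sqrt (drop_quot s / (drop_quot s + c)))"

lemma start_angle_sine_bounds:
  assumes "0 < c"
  shows "0 \<le> sqrt (drop_quot s / (drop_quot s + c))" "sqrt (drop_quot s / (drop_quot s + c)) < 1"
  using drop_quot_pos[of s] assms by auto

lemma start_angle_bounds:
  assumes "0 < c"
  shows "0 \<le> start_angle c s" "start_angle c s < pi / 2"
proof -
  note arg = start_angle_sine_bounds[OF assms, of s]
  then show "0 \<le> start_angle c s"
    unfolding start_angle_def by (intro arcsin_nonneg) auto
  have "start_angle c s < arcsin 1"
    unfolding start_angle_def by (intro arcsin_less_arcsin) (use arg in linarith)+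
  then show "start_angle c s < pi / 2"
    by simp
qed

lemma start_angle_strict_antimono:
  assumes "0 < c" "0 \<le> s" "s < t" "t \<le> 1"
  shows "start_angle c t < start_angle c s"
proof -
  have "drop_quot t / (drop_quot t + c) < drop_quot s / (drop_quot s + c)"
    using drop_quot_strict_antimono[of s t] drop_quot_pos[of s] drop_quot_pos[of t] assms
    by (simp add: field_simps)
  then have "sqrt (drop_quot t / (drop_quot t + c)) < sqrt (drop_quot s / (drop_quot s + c))"
    by simp
  then show ?thesis
    unfolding start_angle_def using start_angle_sine_bounds[OF assms(1)]
    by (intro arcsin_less_arcsin) (smt (verit))+
qed

lemma continuous_on_start_angle:
  assumes "0 < c"
  shows "continuous_on S (start_angle c)"
  unfolding start_angle_def[abs_def]
proof (rule continuous_on_arcsin)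
  have "drop_quot s + c \<noteq> 0" for s
    using drop_quot_pos[of s] assms by simp
  then show "continuous_on S (\<lambda>s. sqrt (drop_quot s / (drop_quot s + c)))"
    by (intro continuous_intros continuous_on_drop_quot) auto
  show "\<forall>s\<in>S. - 1 \<le> sqrt (drop_quot s / (drop_quot s + c)) \<and> sqrt (drop_quot s / (drop_quot s + c)) \<le> 1"
    using start_angle_sine_bounds[OF assms] by (smt (verit))
qed

lemma start_angle_eq_arcsin:
  assumes "0 < c" "0 < s"
  shows "start_angle c s = arcsin (drop_root s / level c s)"
  using assms unfolding start_angle_def drop_root_def level_def
  by (simp add: real_sqrt_divide)

lemma start_angle_0:
  assumes "0 \<le> c"
  shows "start_angle c 0 = pi / 2 - arctan (sqrt c)"
proof -
  have "cos (arctan (sqrt c)) = sqrt (drop_quot 0 / (drop_quot 0 + c))"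
    using assms by (simp add: cos_arctan drop_quot_def real_sqrt_divide)
  then have "start_angle c 0 = arcsin (sin (pi / 2 - arctan (sqrt c)))"
    unfolding start_angle_def by (simp add: sin_cos_eq)
  also have "\<dots> = pi / 2 - arctan (sqrt c)"
  proof (rule arcsin_sin)
    have "0 \<le> arctan (sqrt c)" "arctan (sqrt c) < pi / 2"
      using assms arctan_ubound[of "sqrt c"] by (simp_all add: zero_le_arctan_iff)
    then show "- (pi / 2) \<le> pi / 2 - arctan (sqrt c)" "pi / 2 - arctan (sqrt c) \<le> pi / 2"
      by linarith+
  qed
  finally show ?thesis .
qed

lemma continuous_on_integral_variable_lower_limit:
  fixes f :: "'a::topological_space \<Rightarrow> real \<Rightarrow> real"
  assumes f: "continuous_on (U \<times> {a..b}) (\<lambda>(s, p). f s p)"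
    and l: "continuous_on U l" "\<And>s. s \<in> U \<Longrightarrow> l s \<in> {a..b}"
  shows "continuous_on U (\<lambda>s. integral {l s..b} (f s))"
proof -
  define g where "g s t = (b - l s) * f s (l s + (b - l s) * t)" for s t
  have path: "l s + (b - l s) * t \<in> {a..b}" if "s \<in> U" "t \<in> {0..1}" for s t
  proof -
    have "0 \<le> (b - l s) * t" "(b - l s) * t \<le> b - l s"
      using l(2)[OF that(1)] that(2) by (auto intro: mult_left_le)
    then show ?thesis
      using l(2)[OF that(1)] by auto
  qed
  have "integral {l s..b} (f s) = integral {0..1} (g s)" if "s \<in> U" for s
  proof -
    have "((\<lambda>t. (b - l s) *\<^sub>R f s (l s + (b - l s) * t)) has_integral
            integral {l s + (b - l s) * 0..l s + (b - l s) * 1} (f s)) {0..1}"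
    proof (rule has_integral_substitution)
      show "continuous_on {a..b} (f s)"
        by (rule continuous_on_compose2[OF f, where f = "Pair s", simplified])
           (use that in \<open>auto intro!: continuous_intros\<close>)
    qed (use that l(2) path in \<open>auto intro!: derivative_eq_intros\<close>)
    then have "(g s has_integral integral {l s..b} (f s)) {0..1}"
      unfolding g_def[abs_def] by simp
    then show ?thesis
      by (rule integral_unique[symmetric])
  qed
  moreover have "continuous_on U (\<lambda>s. integral (cbox 0 1) (g s))"
  proof (rule integral_continuous_on_param)
    have "continuous_on (U \<times> {0..1}) (\<lambda>z. f (fst z) (l (fst z) + (b - l (fst z)) * snd z))"
      by (rule continuous_on_compose2[OF f, where f = "\<lambda>z. (fst z, l (fst z) + (b - l (fst z)) * snd z)", simplified])
         (use path in \<open>auto intro!: continuous_intros continuous_on_compose2[OF l(1)]\<close>)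
    then show "continuous_on (U \<times> cbox 0 1) (\<lambda>(s, t). g s t)"
      unfolding g_def case_prod_beta by (auto intro!: continuous_intros continuous_on_compose2[OF l(1)])
  qed
  ultimately show ?thesis
    by (simp add: continuous_on_eq)
qed

definition polar_domain :: "real \<Rightarrow> real set" where
  "polar_domain c = {s. 0 \<le> s \<and> s < 1 \<and> level c s < drop_root 1}"

definition polar_kernel :: "real \<Rightarrow> real \<Rightarrow> real \<Rightarrow> real" where
  "polar_kernel c s p = drop_root_recip_deriv (drop_root_inv (level c s * sin p))"

definition Tl_polar :: "real \<Rightarrow> real \<Rightarrow> real" where
  "Tl_polar c s = integral {start_angle c s..pi / 2} (polar_kernel c s)"

lemma zero_in_polar_domain: "0 \<in> polar_domain c"
  using drop_root_pos[of 1] by (simp add: polar_domain_def)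

lemma polar_kernel_argument:
  assumes "0 \<le> c" "s \<in> polar_domain c" "p \<in> {0..pi / 2}"
  shows "0 \<le> level c s * sin p" "level c s * sin p < drop_root 1"
    and "0 \<le> drop_root_inv (level c s * sin p)" "drop_root_inv (level c s * sin p) < 1"
proof -
  have "0 \<le> level c s" "level c s < drop_root 1" "0 \<le> sin p" "sin p \<le> 1"
    using assms by (auto simp: polar_domain_def level_nonneg sin_ge_zero)
  then show "0 \<le> level c s * sin p" "level c s * sin p < drop_root 1"
    using mult_left_le[of "sin p" "level c s"] by auto
  then show "0 \<le> drop_root_inv (level c s * sin p)" "drop_root_inv (level c s * sin p) < 1"
    using drop_root_drop_root_inv(2)[of "level c s * sin p"] drop_root_inv_less_1 by auto
qed

lemma polar_kernel_ge_1:
  "0 \<le> c \<Longrightarrow> s \<in> polar_domain c \<Longrightarrow> p \<in> {0..pi / 2} \<Longrightarrow> 1 \<le> polar_kernel c s p"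
  unfolding polar_kernel_def using polar_kernel_argument by (intro drop_root_recip_deriv_ge_1)

lemma polar_kernel_mono:
  assumes "0 \<le> c" "s \<in> polar_domain c" "t \<in> polar_domain c" "s \<le> t" "p \<in> {0..pi / 2}"
  shows "polar_kernel c s p \<le> polar_kernel c t p"
proof -
  have "level c s \<le> level c t"
    using assms by (intro strict_mono_on_leD[OF level_strict_mono_on]) (auto simp: polar_domain_def)
  then have "level c s * sin p \<le> level c t * sin p"
    using assms by (intro mult_right_mono) (auto simp: sin_ge_zero)
  then show ?thesis
    unfolding polar_kernel_def
    using polar_kernel_argument[OF assms(1,2,5)] polar_kernel_argument[OF assms(1,3,5)]
    by (intro drop_root_recip_deriv_mono drop_root_inv_mono) auto
qed

lemma polar_kernel_0 [simp]: "polar_kernel c 0 = (\<lambda>_. 1)"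
  by (simp add: polar_kernel_def fun_eq_iff)

lemma continuous_on_polar_kernel:
  assumes "0 \<le> c"
  shows "continuous_on (polar_domain c \<times> {0..pi / 2}) (\<lambda>(s, p). polar_kernel c s p)"
  unfolding polar_kernel_def case_prod_beta
proof (rule continuous_on_compose2[OF continuous_on_drop_root_recip_deriv]
    continuous_on_compose2[OF continuous_on_drop_root_inv])+
  show "continuous_on (polar_domain c \<times> {0..pi / 2}) (\<lambda>z. level c (fst z) * sin (snd z))"
    by (intro continuous_intros continuous_on_compose2[OF continuous_on_level[OF assms]]) auto
qed (use polar_kernel_argument[OF assms] in \<open>force simp: less_imp_le\<close>)+

lemma continuous_on_polar_kernel_slice:
  assumes "0 \<le> c" "s \<in> polar_domain c"
  shows "continuous_on {0..pi / 2} (polar_kernel c s)"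
  using assms
  by (intro continuous_on_compose2[OF continuous_on_polar_kernel[OF assms(1)], where f = "Pair s", simplified])
     (auto intro!: continuous_intros)

lemma continuous_on_Tl_polar:
  assumes "0 < c"
  shows "continuous_on (polar_domain c) (Tl_polar c)"
  unfolding Tl_polar_def
  using continuous_on_polar_kernel continuous_on_start_angle start_angle_bounds assms
  by (intro continuous_on_integral_variable_lower_limit[where a = 0]) (auto simp: less_imp_le)

lemma polar_kernel_integrable:
  assumes "0 \<le> c" "s \<in> polar_domain c" "0 \<le> a" "b \<le> pi / 2"
  shows "polar_kernel c s integrable_on {a..b}"
  using assms
  by (intro integrable_continuous_interval continuous_on_subset[OF continuous_on_polar_kernel_slice]) auto

lemma polar_kernel_integral_ge:
  assumes "0 \<le> c" "s \<in> polar_domain c" "0 \<le> a" "a \<le> b" "b \<le> pi / 2"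
  shows "b - a \<le> integral {a..b} (polar_kernel c s)"
proof -
  have "integral {a..b} (\<lambda>_. 1) \<le> integral {a..b} (polar_kernel c s)"
    using assms by (intro integral_le polar_kernel_integrable polar_kernel_ge_1) auto
  then show ?thesis
    using assms by simp
qed

lemma Tl_polar_pos:
  assumes "0 < c" "s \<in> polar_domain c"
  shows "0 < Tl_polar c s"
  using polar_kernel_integral_ge[of c s "start_angle c s" "pi / 2"] start_angle_bounds[of c s] assms
  unfolding Tl_polar_def by auto

lemma Tl_polar_strict_mono_on:
  assumes "0 < c"
  shows "strict_mono_on (polar_domain c) (Tl_polar c)"
proof (rule strict_mono_onI)
  fix s t assume st: "s \<in> polar_domain c" "t \<in> polar_domain c" "s < t"
  define a where "a = start_angle c s"
  define b where "b = start_angle c t"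
  have ab: "0 \<le> b" "b < a" "a < pi / 2"
    using start_angle_bounds[OF assms] start_angle_strict_antimono[OF assms, of s t] st
    unfolding a_def b_def by (auto simp: polar_domain_def)
  have "integral {a..pi / 2} (polar_kernel c s) \<le> integral {a..pi / 2} (polar_kernel c t)"
    using ab st assms
    by (intro integral_le polar_kernel_integrable polar_kernel_mono) auto
  also have "\<dots> < integral {b..a} (polar_kernel c t) + integral {a..pi / 2} (polar_kernel c t)"
    using polar_kernel_integral_ge[of c t b a] ab st assms by auto
  also have "\<dots> = integral {b..pi / 2} (polar_kernel c t)"
    using ab st assms by (intro Henstock_Kurzweil_Integration.integral_combine polar_kernel_integrable) auto
  finally show "Tl_polar c s < Tl_polar c t"
    unfolding Tl_polar_def a_def b_def .
qed

lemma Tl_polar_0: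
  assumes "0 < c"
  shows "Tl_polar c 0 = arctan (sqrt c)"
  using start_angle_0[of c] start_angle_bounds[OF assms, of 0] assms
  by (simp add: Tl_polar_def)

lemma polar_primitive_has_real_derivative:
  assumes "0 < c" "s \<in> polar_domain c" "0 < t" "t < 1" "drop_root t < level c s"
  shows "((\<lambda>t. integral {arcsin (drop_root t / level c s)..pi / 2} (polar_kernel c s))
           has_real_derivative - 1 / sqrt ((level c s)\<^sup>2 - (drop_root t)\<^sup>2)) (at t)"
proof -
  define R where "R = level c s"
  define w where "w = drop_root t / R"
  define K where "K = polar_kernel c s"
  have R: "0 < R"
    using drop_root_pos[of t] assms unfolding R_def by linarith
  have w: "0 < w" "w < 1"
    using drop_root_pos[of t] assms R unfolding w_def R_def by auto
  have angle: "0 < arcsin w" "arcsin w < pi / 2"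
    using arcsin_less_arcsin[of 0 w] arcsin_less_arcsin[of w 1] w by auto
  have d_angle: "((\<lambda>t. arcsin (drop_root t / R)) has_real_derivative
      inverse (sqrt (1 - w\<^sup>2)) * ((1 - t)\<^sup>2 / sqrt (drop_quot t) / R)) (at t)"
    using DERIV_chain2[OF DERIV_arcsin DERIV_cdivide[OF drop_root_has_real_derivative]] w
    unfolding w_def by simp
  have "((\<lambda>\<theta>. integral {\<theta>..pi / 2} K) has_real_derivative - K (arcsin w)) (at (arcsin w) within {0..pi / 2})"
    unfolding K_def
    using assms angle by (intro integral_has_real_derivative' continuous_on_polar_kernel_slice) auto
  then have d_integral: "((\<lambda>\<theta>. integral {\<theta>..pi / 2} K) has_real_derivative - K (arcsin w)) (at (arcsin w))"
    using at_within_Icc_at[of 0 "arcsin w" "pi / 2"] angle by simp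
  have "K (arcsin w) = drop_root_recip_deriv t"
    using R w assms drop_root_inv_drop_root[of t]
    unfolding K_def polar_kernel_def R_def[symmetric] w_def by (simp add: sin_arcsin)
  then have "- K (arcsin w) * (inverse (sqrt (1 - w\<^sup>2)) * ((1 - t)\<^sup>2 / sqrt (drop_quot t) / R))
               = - 1 / (R * sqrt (1 - w\<^sup>2))"
    using assms drop_quot_pos[of t] by (simp add: drop_root_recip_deriv_def field_simps)
  also have "R * sqrt (1 - w\<^sup>2) = sqrt (R\<^sup>2 - (drop_root t)\<^sup>2)"
  proof -
    have "1 - w\<^sup>2 = (R\<^sup>2 - (drop_root t)\<^sup>2) / R\<^sup>2"
      using R unfolding w_def by (simp add: field_simps)
    then show ?thesis
      using R by (simp add: real_sqrt_divide)
  qed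
  finally show ?thesis
    using DERIV_chain2[where g = "\<lambda>t. arcsin (drop_root t / R)", OF d_integral[unfolded w_def] d_angle]
    unfolding R_def K_def w_def by simp
qed

lemma polar_turning_point:
  assumes c: "0 < c" and s: "s \<in> polar_domain c" "0 < s"
  shows "drop_root (drop_root_inv (level c s)) = level c s"
    and "s < drop_root_inv (level c s)" "drop_root_inv (level c s) < 1"
proof -
  have R: "0 \<le> level c s" "level c s < drop_root 1"
    using s c by (auto simp: polar_domain_def level_nonneg)
  then show S: "drop_root (drop_root_inv (level c s)) = level c s" "drop_root_inv (level c s) < 1"
    using drop_root_drop_root_inv[of "level c s"] drop_root_inv_less_1[of "level c s"] by auto
  have "drop_root s < drop_root (drop_root_inv (level c s))"
    using drop_root_less_level[OF c s(2)] S by simp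
  then show "s < drop_root_inv (level c s)"
    using strict_mono_on_leD[OF drop_root_strict_mono_on, of "drop_root_inv (level c s)" s]
      drop_root_drop_root_inv(2)[of "level c s"] R s unfolding polar_domain_def by force
qed

lemma continuous_on_polar_primitive:
  assumes c: "0 < c" and s: "s \<in> polar_domain c" "0 < s"
  shows "continuous_on {0..drop_root_inv (level c s)}
           (\<lambda>t. integral {arcsin (drop_root t / level c s)..pi / 2} (polar_kernel c s))"
proof -
  define R where "R = level c s"
  define S where "S = drop_root_inv R"
  have R: "0 < R"
    using drop_root_pos[OF s(2)] drop_root_less_level[OF c s(2)] unfolding R_def by linarith
  have S: "drop_root S = R" "S < 1"
    using polar_turning_point[OF c s] unfolding R_def S_def by auto
  have range: "0 \<le> drop_root t / R \<and> drop_root t / R \<le> 1" if "t \<in> {0..S}" for t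
  proof -
    have "0 \<le> drop_root t" "drop_root t \<le> drop_root S"
      using that S by (auto intro: drop_root_nonneg strict_mono_on_leD[OF drop_root_strict_mono_on])
    then show ?thesis
      using R S by auto
  qed
  have "continuous_on {0..S} (\<lambda>t. arcsin (drop_root t / R))"
    using range R by (intro continuous_on_arcsin continuous_intros continuous_on_drop_root) force+
  moreover have "arcsin (drop_root t / R) \<in> {0..pi / 2}" if "t \<in> {0..S}" for t
    using range[OF that] arcsin_le_arcsin[of _ 1] by (auto intro: arcsin_nonneg)
  ultimately show ?thesis
    using continuous_on_polar_kernel_slice[OF less_imp_le[OF c] s(1)] unfolding R_def[symmetric] S_def[symmetric]
    by (intro continuous_on_compose2[OF indefinite_integral_continuous_1'] integrable_continuous_interval) auto
qed

lemma has_integral_Tl_polar: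
  assumes c: "0 < c" and s: "s \<in> polar_domain c" "0 < s"
  shows "((\<lambda>u. 1 / sqrt ((level c s)\<^sup>2 - (drop_root (1 - u))\<^sup>2)) has_integral Tl_polar c s)
           {1 - drop_root_inv (level c s)..1 - s}"
proof -
  define R where "R = level c s"
  define S where "S = drop_root_inv R"
  define Phi where "Phi u = integral {arcsin (drop_root (1 - u) / R)..pi / 2} (polar_kernel c s)" for u
  have R: "0 < R" "R < drop_root 1"
    using drop_root_pos[of s] drop_root_less_level[OF c, of s] s
    unfolding R_def polar_domain_def by auto
  have S: "drop_root S = R" "s < S" "S < 1"
    using polar_turning_point[OF c s] unfolding R_def S_def by auto
  have "continuous_on {1 - S..1 - s} Phi"
    unfolding Phi_def R_def S_def using s
    by (intro continuous_on_compose2[OF continuous_on_polar_primitive[OF c s]] continuous_intros)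
       (auto simp: polar_domain_def)
  moreover have "(Phi has_real_derivative 1 / sqrt (R\<^sup>2 - (drop_root (1 - u))\<^sup>2)) (at u)"
    if "1 - S < u" "u < 1 - s" for u
  proof -
    have "drop_root (1 - u) < drop_root S"
      using that s S by (intro strict_mono_onD[OF drop_root_strict_mono_on]) (auto simp: polar_domain_def)
    then show ?thesis
      using DERIV_chain2[OF polar_primitive_has_real_derivative[OF c s(1), of "1 - u"] DERIV_diff[OF DERIV_const DERIV_ident]]
        that s S unfolding Phi_def R_def by (simp add: polar_domain_def)
  qed
  ultimately have "((\<lambda>u. 1 / sqrt (R\<^sup>2 - (drop_root (1 - u))\<^sup>2)) has_integral Phi (1 - s) - Phi (1 - S))
                     {1 - S..1 - s}"
    using S
    by (intro fundamental_theorem_of_calculus_interior) (auto simp: has_real_derivative_iff_has_vector_derivative)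
  moreover have "Phi (1 - s) = Tl_polar c s" "Phi (1 - S) = 0"
    using start_angle_eq_arcsin[OF c s(2)] R S unfolding Phi_def Tl_polar_def R_def by simp_all
  ultimately show ?thesis
    unfolding R_def S_def by simp
qed

lemma turning_point_integrand_lower_bound:
  assumes "0 < mu" "0 < m" "m < u" "u \<le> 2 * m" "2 * m \<le> 1"
  shows "1 / sqrt (16 * mu * m ^ 3 / 3) \<le> 1 / sqrt (2 * mu * (G u - G m))"
proof -
  have "G m < G u"
    using assms by (intro strict_mono_onD[OF G_strict_mono_on]) auto
  moreover have "G 0 \<le> G m"
    using assms by (intro strict_mono_on_leD[OF G_strict_mono_on]) auto
  moreover have "u ^ 3 \<le> (2 * m) ^ 3"
    using assms by (intro power_mono) auto
  ultimately have "0 < 2 * mu * (G u - G m)" "2 * mu * (G u - G m) \<le> 16 * mu * m ^ 3 / 3"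
    using G_le_cube[of u] assms by (auto simp: G_def[of 0])
  then show ?thesis
    by (intro divide_left_mono real_sqrt_le_mono) auto
qed

lemma turning_point_integral_lower_bound:
  fixes mu m x :: real
  defines "f \<equiv> \<lambda>u. 1 / sqrt (2 * mu * (G u - G m))"
  assumes "0 < mu" "0 < m" "2 * m \<le> x" "x \<le> 1" and f_int: "f integrable_on {m..x}"
  shows "1 / sqrt (16 * mu * m / 3) \<le> integral {m..x} f"
proof -
  define C where "C = 1 / sqrt (16 * mu * m ^ 3 / 3)"
  have f_nonneg: "0 \<le> f u" if "u \<in> {m..x}" for u
    using that assms strict_mono_on_leD[OF G_strict_mono_on, of m u] unfolding f_def by simp
  have "1 / sqrt (16 * mu * m / 3) = m * C"
  proof -
    have "sqrt (16 * mu * m ^ 3 / 3) = m * sqrt (16 * mu * m / 3)"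
      using assms real_sqrt_mult[of "m\<^sup>2" "16 * mu * m / 3"]
      by (simp add: power2_eq_square power3_eq_cube mult_ac)
    then show ?thesis
      unfolding C_def using assms by simp
  qed
  also have "\<dots> = integral {m..2 * m} (\<lambda>_. C)"
    using assms by simp
  \<comment> \<open>f m = 1 / sqrt 0 = 0, so the comparison with C holds only off the point m.\<close>
  also have "\<dots> \<le> integral {m..2 * m} (\<lambda>u. if u = m then C else f u)"
  proof (rule integral_le)
    show "(\<lambda>u. if u = m then C else f u) integrable_on {m..2 * m}"
      using assms by (intro integrable_spike[OF integrable_on_subinterval[OF f_int], of _ _ "{m}"]) auto
  qed (use turning_point_integrand_lower_bound assms in \<open>auto simp: f_def C_def\<close>)
  also have "\<dots> = integral {m..2 * m} f"
    by (rule integral_spike[of "{m}"]) auto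
  also have "\<dots> \<le> integral {m..x} f"
    using assms f_nonneg
    by (intro integral_subset_le integrable_on_subinterval[OF f_int]) auto
  finally show ?thesis .
qed

context
  fixes mu k :: real
  assumes mu: "0 < mu" and k: "0 < k"
begin

lemma ratio_pos: "0 < k\<^sup>2 / mu"
  using mu k by simp

lemma energy_identity:
  "(yline k x)\<^sup>2 + 2 * mu * (G u - G x) = mu * ((level (k\<^sup>2 / mu) (1 - x))\<^sup>2 - (drop_root (1 - u))\<^sup>2)"
proof -
  have "mu * (level (k\<^sup>2 / mu) (1 - x))\<^sup>2 = mu * (drop_root (1 - x))\<^sup>2 + k\<^sup>2 * (1 - x)\<^sup>2"
    using level_sq[OF less_imp_le[OF ratio_pos]] mu by (simp add: algebra_simps)
  then show ?thesis
    unfolding drop_root_sq yline_def by (simp add: power2_eq_square algebra_simps)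
qed

lemma crossing_iff_level:
  assumes "0 < u" "u < 1"
  shows "(\<exists>v. v = yline k u \<and> v\<^sup>2 = 2 * mu * G u \<and> v < 0) \<longleftrightarrow> level (k\<^sup>2 / mu) (1 - u) = drop_root 1"
proof -
  have "yline k u < 0"
    using assms k by (simp add: yline_def)
  moreover have "(yline k u)\<^sup>2 = 2 * mu * G u \<longleftrightarrow> (level (k\<^sup>2 / mu) (1 - u))\<^sup>2 = (drop_root 1)\<^sup>2"
  proof -
    have "(yline k u)\<^sup>2 + 2 * mu * (G 1 - G u) = mu * (level (k\<^sup>2 / mu) (1 - u))\<^sup>2"
      using energy_identity[of u 1] by simp
    moreover have "(drop_root 1)\<^sup>2 = 2 * G 1"
      by (simp add: drop_root_sq G_def)
    ultimately have "(yline k u)\<^sup>2 = 2 * mu * G u \<longleftrightarrow>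
                       mu * (level (k\<^sup>2 / mu) (1 - u))\<^sup>2 = mu * (drop_root 1)\<^sup>2"
      by (auto simp: algebra_simps)
    then show ?thesis
      using mu by simp
  qed
  moreover have "0 \<le> level (k\<^sup>2 / mu) (1 - u)" "0 \<le> drop_root 1"
    using assms ratio_pos by (simp_all add: level_nonneg drop_root_nonneg)
  ultimately show ?thesis
    using power2_eq_iff_nonneg by auto
qed

lemma xl_crossing: "0 < xl mu k" "xl mu k < 1" "level (k\<^sup>2 / mu) (1 - xl mu k) = drop_root 1"
proof -
  let ?c = "k\<^sup>2 / mu"
  have mono: "strict_mono_on {0..1} (level ?c)"
    using level_strict_mono_on ratio_pos by simp
  have "level ?c 0 < drop_root 1" "drop_root 1 < level ?c 1"
    using drop_root_pos[of 1] drop_root_less_level[OF ratio_pos, of 1] by simp_all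
  moreover have "continuous_on {0..1} (level ?c)"
    using continuous_on_level ratio_pos by simp
  ultimately obtain \<sigma> where \<sigma>: "0 < \<sigma>" "\<sigma> < 1" "level ?c \<sigma> = drop_root 1"
    using IVT'[of "level ?c" 0 "drop_root 1" 1] by (force simp: le_less)
  have "xl mu k = 1 - \<sigma>"
    unfolding xl_def
  proof (rule the_equality)
    show "0 < 1 - \<sigma> \<and> 1 - \<sigma> < 1 \<and> (\<exists>v. v = yline k (1 - \<sigma>) \<and> v\<^sup>2 = 2 * mu * G (1 - \<sigma>) \<and> v < 0)"
      using \<sigma> crossing_iff_level[of "1 - \<sigma>"] by simp
    fix u assume "0 < u \<and> u < 1 \<and> (\<exists>v. v = yline k u \<and> v\<^sup>2 = 2 * mu * G u \<and> v < 0)"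
    then have u: "level ?c (1 - u) = level ?c \<sigma>" "0 < u" "u < 1"
      using crossing_iff_level[of u] \<sigma> by auto
    have "\<sigma> = 1 - u"
      by (rule strict_mono_on_eqD[OF mono u(1)]) (use u \<sigma> in auto)
    then show "u = 1 - \<sigma>"
      by simp
  qed
  then show "0 < xl mu k" "xl mu k < 1" "level ?c (1 - xl mu k) = drop_root 1"
    using \<sigma> by simp_all
qed

lemma one_minus_in_polar_domain:
  assumes "xl mu k < x" "x < 1"
  shows "1 - x \<in> polar_domain (k\<^sup>2 / mu)"
proof -
  have "level (k\<^sup>2 / mu) (1 - x) < level (k\<^sup>2 / mu) (1 - xl mu k)"
    using assms xl_crossing ratio_pos by (intro strict_mono_onD[OF level_strict_mono_on]) auto
  then show ?thesis
    using assms xl_crossing by (simp add: polar_domain_def)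
qed

lemma mfun_eq:
  assumes x: "xl mu k < x" "x < 1"
  shows "mfun mu k x = 1 - drop_root_inv (level (k\<^sup>2 / mu) (1 - x))"
    and "0 < mfun mu k x" "mfun mu k x < x"
proof -
  let ?R = "level (k\<^sup>2 / mu) (1 - x)"
  define m where "m = 1 - drop_root_inv ?R"
  have S: "drop_root (1 - m) = ?R" "1 - x < 1 - m" "1 - m < 1"
    using polar_turning_point[OF ratio_pos one_minus_in_polar_domain[OF x]] x unfolding m_def by auto
  have turning: "2 * mu * G m = 2 * mu * G x - (yline k x)\<^sup>2"
    using energy_identity[of x m] S(1) by (simp add: algebra_simps)
  have "mfun mu k x = m"
    unfolding mfun_def
  proof (rule the_equality)
    show "0 < m \<and> m < x \<and> 2 * mu * G m = 2 * mu * G x - (yline k x)\<^sup>2"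
      using S turning by simp
    fix m' assume m': "0 < m' \<and> m' < x \<and> 2 * mu * G m' = 2 * mu * G x - (yline k x)\<^sup>2"
    then have "2 * mu * G m = 2 * mu * G m'"
      using turning by simp
    then have "G m = G m'"
      using mu by simp
    then show "m' = m"
      by (rule strict_mono_on_eqD[OF G_strict_mono_on]) (use m' S x in auto)
  qed
  then show "mfun mu k x = 1 - drop_root_inv ?R" "0 < mfun mu k x" "mfun mu k x < x"
    using S unfolding m_def by simp_all
qed

lemma Tl_integrand_eq:
  "Tl_integrand mu k x u = 1 / sqrt ((level (k\<^sup>2 / mu) (1 - x))\<^sup>2 - (drop_root (1 - u))\<^sup>2) / sqrt mu"
  unfolding Tl_integrand_def energy_identity by (simp add: real_sqrt_mult)

lemma Tl_has_integral:
  assumes "xl mu k < x" "x < 1"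
  shows "(Tl_integrand mu k x has_integral Tl_polar (k\<^sup>2 / mu) (1 - x) / sqrt mu) {mfun mu k x..x}"
  using has_integral_divide[OF has_integral_Tl_polar[OF ratio_pos one_minus_in_polar_domain[OF assms]]] assms
  by (simp add: mfun_eq Tl_integrand_eq[abs_def])

lemma Tl_eq: "xl mu k < x \<Longrightarrow> x < 1 \<Longrightarrow> Tl mu k x = Tl_polar (k\<^sup>2 / mu) (1 - x) / sqrt mu"
  unfolding Tl_def using Tl_has_integral by (rule integral_unique)

lemma continuous_on_Tl: "continuous_on {xl mu k<..<1} (Tl mu k)"
proof -
  have "continuous_on {xl mu k<..<1} (\<lambda>x. Tl_polar (k\<^sup>2 / mu) (1 - x) / sqrt mu)"
    using one_minus_in_polar_domain mu
    by (intro continuous_intros continuous_on_compose2[OF continuous_on_Tl_polar[OF ratio_pos]]) auto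
  then show ?thesis
    by (rule continuous_on_eq) (simp add: Tl_eq)
qed

lemma Tl_strict_antimono:
  assumes "xl mu k < a" "a < b" "b < 1"
  shows "Tl mu k b < Tl mu k a"
  using strict_mono_onD[OF Tl_polar_strict_mono_on[OF ratio_pos], of "1 - b" "1 - a"]
    one_minus_in_polar_domain assms mu
  by (simp add: Tl_eq divide_strict_right_mono)

lemma Tl_tendsto_at_left_1: "(Tl mu k \<longlongrightarrow> (1 / sqrt mu) * arctan (k / sqrt mu)) (at_left 1)"
proof -
  have inside: "\<forall>\<^sub>F x in at_left 1. x \<in> {xl mu k<..<1}"
    using xl_crossing by (intro eventually_at_left_real) auto
  have "((\<lambda>x. 1 - x) \<longlongrightarrow> 1 - 1) (at_left (1::real))"
    by (intro tendsto_diff tendsto_const tendsto_ident_at)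
  then have "((\<lambda>x. 1 - x) \<longlongrightarrow> 0) (at_left (1::real))"
    by simp
  moreover have "\<forall>\<^sub>F x in at_left 1. 1 - x \<in> polar_domain (k\<^sup>2 / mu)"
    using inside by eventually_elim (simp add: one_minus_in_polar_domain)
  ultimately have "((\<lambda>x. Tl_polar (k\<^sup>2 / mu) (1 - x)) \<longlongrightarrow> Tl_polar (k\<^sup>2 / mu) 0) (at_left 1)"
    by (rule continuous_on_tendsto_compose[OF continuous_on_Tl_polar[OF ratio_pos] _ zero_in_polar_domain])
  then have lim: "((\<lambda>x. Tl_polar (k\<^sup>2 / mu) (1 - x) / sqrt mu) \<longlongrightarrow> Tl_polar (k\<^sup>2 / mu) 0 / sqrt mu) (at_left 1)"
    using mu by (intro tendsto_divide tendsto_const) auto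
  have Tl_polar_at_0: "Tl_polar (k\<^sup>2 / mu) 0 / sqrt mu = (1 / sqrt mu) * arctan (k / sqrt mu)"
    using mu k by (simp add: Tl_polar_0[OF ratio_pos] real_sqrt_divide)
  have "\<forall>\<^sub>F x in at_left 1. Tl_polar (k\<^sup>2 / mu) (1 - x) / sqrt mu = Tl mu k x"
    using inside by eventually_elim (simp add: Tl_eq)
  from Lim_transform_eventually[OF lim this] show ?thesis
    unfolding Tl_polar_at_0 .
qed

lemma mfun_tendsto_0: "(mfun mu k \<longlongrightarrow> 0) (at_right (xl mu k))"
proof -
  have inside: "\<forall>\<^sub>F x in at_right (xl mu k). x \<in> {xl mu k<..<1}"
    using xl_crossing by (intro eventually_at_right_real) auto
  have "isCont (level (k\<^sup>2 / mu)) (1 - xl mu k)"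
    using continuous_on_level[OF less_imp_le[OF ratio_pos], of UNIV] by (simp add: continuous_on_eq_continuous_at)
  moreover have "((\<lambda>x. 1 - x) \<longlongrightarrow> 1 - xl mu k) (at_right (xl mu k))"
    by (intro tendsto_diff tendsto_const tendsto_ident_at)
  ultimately have "((\<lambda>x. level (k\<^sup>2 / mu) (1 - x)) \<longlongrightarrow> drop_root 1) (at_right (xl mu k))"
    unfolding xl_crossing(3)[symmetric] by (rule isCont_tendsto_compose)
  moreover have "\<forall>\<^sub>F x in at_right (xl mu k). level (k\<^sup>2 / mu) (1 - x) \<in> {0..drop_root 1}"
  proof (rule eventually_mono[OF inside])
    fix x assume "x \<in> {xl mu k<..<1}"
    then show "level (k\<^sup>2 / mu) (1 - x) \<in> {0..drop_root 1}"
      using one_minus_in_polar_domain[of x] level_nonneg[OF less_imp_le[OF ratio_pos], of "1 - x"]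
      by (auto simp: polar_domain_def)
  qed
  ultimately have "((\<lambda>x. drop_root_inv (level (k\<^sup>2 / mu) (1 - x))) \<longlongrightarrow> drop_root_inv (drop_root 1))
                     (at_right (xl mu k))"
    using drop_root_pos[of 1] by (intro continuous_on_tendsto_compose[OF continuous_on_drop_root_inv]) auto
  then have lim: "((\<lambda>x. 1 - drop_root_inv (level (k\<^sup>2 / mu) (1 - x))) \<longlongrightarrow> 0) (at_right (xl mu k))"
    using tendsto_diff[OF tendsto_const[of 1]] by force
  have "\<forall>\<^sub>F x in at_right (xl mu k). 1 - drop_root_inv (level (k\<^sup>2 / mu) (1 - x)) = mfun mu k x"
    using inside by eventually_elim (simp add: mfun_eq)
  from Lim_transform_eventually[OF lim this] show ?thesis
    by simp
qed

lemma Tl_ge_turning_point_bound: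
  assumes x: "xl mu k < x" "x < 1" and "2 * mfun mu k x \<le> x"
  shows "1 / sqrt (16 * mu * mfun mu k x / 3) \<le> Tl mu k x"
proof -
  define m where "m = mfun mu k x"
  have "drop_root (1 - m) = level (k\<^sup>2 / mu) (1 - x)"
    using polar_turning_point(1)[OF ratio_pos one_minus_in_polar_domain[OF x]] x
    unfolding m_def by (simp add: mfun_eq)
  then have "(yline k x)\<^sup>2 + 2 * mu * (G u - G x) = 2 * mu * (G u - G m)" for u
    unfolding energy_identity by (simp add: drop_root_sq algebra_simps flip: \<open>drop_root (1 - m) = _\<close>)
  then have integrand: "Tl_integrand mu k x = (\<lambda>u. 1 / sqrt (2 * mu * (G u - G m)))"
    by (simp add: Tl_integrand_def[abs_def])
  show ?thesis
    using turning_point_integral_lower_bound[of mu m x] Tl_has_integral[OF x] mfun_eq(2)[OF x] assms mu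
    unfolding Tl_def m_def[symmetric] integrand by (auto simp: has_integral_integrable)
qed

lemma Tl_filterlim_at_right_xl: "filterlim (Tl mu k) at_top (at_right (xl mu k))"
proof -
  have "\<forall>\<^sub>F x in at_right (xl mu k). mfun mu k x < xl mu k / 2"
    using mfun_tendsto_0 xl_crossing by (intro order_tendstoD(2)) auto
  moreover have "\<forall>\<^sub>F x in at_right (xl mu k). x \<in> {xl mu k<..<1}"
    using xl_crossing by (intro eventually_at_right_real) auto
  ultimately have near: "\<forall>\<^sub>F x in at_right (xl mu k).
                           xl mu k < x \<and> x < 1 \<and> 0 < mfun mu k x \<and> 2 * mfun mu k x \<le> x"
    by eventually_elim (auto intro: mfun_eq(2))
  have "((\<lambda>x. sqrt (16 * mu * mfun mu k x / 3)) \<longlongrightarrow> 0) (at_right (xl mu k))"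
    using tendsto_real_sqrt[OF tendsto_divide[OF tendsto_mult[OF tendsto_const mfun_tendsto_0] tendsto_const]]
    by simp
  moreover have "\<forall>\<^sub>F x in at_right (xl mu k). 0 < sqrt (16 * mu * mfun mu k x / 3)"
    using near by eventually_elim (use mu in simp)
  ultimately have "filterlim (\<lambda>x. inverse (sqrt (16 * mu * mfun mu k x / 3))) at_top (at_right (xl mu k))"
    by (rule filterlim_inverse_at_top)
  moreover have "\<forall>\<^sub>F x in at_right (xl mu k). inverse (sqrt (16 * mu * mfun mu k x / 3)) \<le> Tl mu k x"
    using near by eventually_elim (use Tl_ge_turning_point_bound in \<open>simp add: inverse_eq_divide\<close>)
  ultimately show ?thesis
    by (rule filterlim_at_top_mono)
qed

end

theorem proposition3p2:
  fixes mu k :: real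
  assumes "mu > 0" and "k > 0"
  shows "(\<forall>x \<in> {xl mu k <..< 1}.
            Tl_integrand mu k x integrable_on {mfun mu k x .. x} \<and> Tl mu k x > 0)
       \<and> continuous_on {xl mu k <..< 1} (Tl mu k)
       \<and> (\<forall>a b. xl mu k < a \<longrightarrow> a < b \<longrightarrow> b < 1 \<longrightarrow> Tl mu k b < Tl mu k a)
       \<and> (Tl mu k \<longlongrightarrow> (1 / sqrt mu) * arctan (k / sqrt mu)) (at_left 1)
       \<and> filterlim (Tl mu k) at_top (at_right (xl mu k))"
proof -
  have "Tl_integrand mu k x integrable_on {mfun mu k x..x} \<and> Tl mu k x > 0" if "x \<in> {xl mu k<..<1}" for x
    using that Tl_has_integral[OF assms] Tl_eq[OF assms] assms
      Tl_polar_pos[OF ratio_pos[OF assms] one_minus_in_polar_domain[OF assms]]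
    by (auto simp: has_integral_integrable)
  then show ?thesis
    using continuous_on_Tl[OF assms] Tl_strict_antimono[OF assms] Tl_tendsto_at_left_1[OF assms]
      Tl_filterlim_at_right_xl[OF assms]
    by blast
qed

end
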